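(* Let $\kappa$ and $\lambda$ be infinite cardinals with $cf(\kappa)\leq\lambda<\kappa$. Let $\mathbb{W}=\{-1\}\cup\kappa$, ordered by declaring $-1$ smaller than every ordinal and ordering $\kappa$ as ordinals. Let $X=\{f\in\mathbb{W}^{\lambda^+}: supp(f)<\lambda^+\}$, where $supp(f)=\min\{\gamma<\lambda^+: f(\alpha)=0 \text{ for every } \alpha\geq\gamma\}$, with the order topology of the lexicographic order. Then $X$ is a strong Choquet (hence Baire), non-archimedean (hence hereditarily paracompact) LOTS, and $dis(X)\leq\lambda^+<\kappa<\Delta(X)$.
   Context: A LOTS is a linearly ordered set with its order topology. A space is non-archimedean if it has a base such that any two elements are either disjoint or one contains the other. A space is strong Choquet if player II has a winning strategy in the strong Choquet game (player I plays an open set $B_n$ and a point $f_n\in B_n$, with $B_n\subseteq A_{n-1}$; player II plays an open $A_n$ with $f_n\in A_n\subseteq B_n$; II wins if $\bigcap_n A_n\neq\emptyset$). $dis(X)$ is the least number of discrete subspaces needed to cover $X$; $\Delta(X)$ is the least cardinality of a non-empty open subset of $X$. *)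

theory Defs
  imports "HOL-Analysis.Analysis"
begin

definition cofinal_in :: "'a rel \<Rightarrow> 'a set \<Rightarrow> bool" where
  "cofinal_in k S \<longleftrightarrow> S \<subseteq> Field k \<and> (\<forall>a\<in>Field k. \<exists>b\<in>S. (a, b) \<in> k)"

definition cf_le :: "'a rel \<Rightarrow> 'b set \<Rightarrow> bool" where
  "cf_le k A \<longleftrightarrow> (\<exists>S. cofinal_in k S \<and> (card_of S, card_of A) \<in> ordLeq)"

text \<open>None plays the role of -1, Some a for an ordinal a < kappa.\<close>
definition W_less :: "'a rel \<Rightarrow> 'a option \<Rightarrow> 'a option \<Rightarrow> bool" where
  "W_less k x y \<longleftrightarrow>
     (case (x, y) of
        (None, Some b) \<Rightarrow> True
      | (Some a, Some b) \<Rightarrow> (a, b) \<in> k \<and> a \<noteq> b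
      | _ \<Rightarrow> False)"

definition W_set :: "'a rel \<Rightarrow> 'a option set" where
  "W_set k = insert None (Some ` Field k)"

definition ord_zero :: "'a rel \<Rightarrow> 'a" where
  "ord_zero k = wo_rel.minim k (Field k)"

text \<open>X = {f \<in> W^(L) : supp f < L}, where L is a well-order (used with L = lambda^+).
  Functions are extensional: value None outside Field L.  supp f < L means that there is
  gamma < L with f alpha = 0 for all alpha >= gamma.\<close>
definition Xspace :: "'a rel \<Rightarrow> 'i rel \<Rightarrow> ('i \<Rightarrow> 'a option) set" where
  "Xspace k L = {f. (\<forall>\<alpha>\<in>Field L. f \<alpha> \<in> W_set k) \<and> (\<forall>\<alpha>. \<alpha> \<notin> Field L \<longrightarrow> f \<alpha> = None)
      \<and> (\<exists>\<gamma>\<in>Field L. \<forall>\<alpha>\<in>Field L. (\<gamma>, \<alpha>) \<in> L \<longrightarrow> f \<alpha> = Some (ord_zero k))}"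

definition lex_less :: "'a rel \<Rightarrow> 'i rel \<Rightarrow> ('i \<Rightarrow> 'a option) \<Rightarrow> ('i \<Rightarrow> 'a option) \<Rightarrow> bool" where
  "lex_less k L f g \<longleftrightarrow>
     (\<exists>\<alpha>\<in>Field L. W_less k (f \<alpha>) (g \<alpha>) \<and> (\<forall>\<beta>. (\<beta>, \<alpha>) \<in> L \<and> \<beta> \<noteq> \<alpha> \<longrightarrow> f \<beta> = g \<beta>))"

definition strict_linear_on :: "'x set \<Rightarrow> ('x \<Rightarrow> 'x \<Rightarrow> bool) \<Rightarrow> bool" where
  "strict_linear_on S lt \<longleftrightarrow>
     (\<forall>x\<in>S. \<not> lt x x) \<and>
     (\<forall>x\<in>S. \<forall>y\<in>S. \<forall>z\<in>S. lt x y \<and> lt y z \<longrightarrow> lt x z) \<and>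
     (\<forall>x\<in>S. \<forall>y\<in>S. x = y \<or> lt x y \<or> lt y x)"

text \<open>Order topology on S: generated by the open rays (and S itself, so the topspace is S).\<close>
definition order_topology_on :: "'x set \<Rightarrow> ('x \<Rightarrow> 'x \<Rightarrow> bool) \<Rightarrow> 'x topology" where
  "order_topology_on S lt = topology_generated_by
     (insert S ({{y\<in>S. lt y a} | a. a \<in> S} \<union> {{y\<in>S. lt a y} | a. a \<in> S}))"

text \<open>Strong Choquet game. A strategy for player II maps the history of I's moves
  [(B_0,f_0),...,(B_n,f_n)] to II's answer A_n (II's own earlier moves are determined
  by the strategy).\<close>
definition choquet_answer ::
    "(('x set \<times> 'x) list \<Rightarrow> 'x set) \<Rightarrow> (nat \<Rightarrow> 'x set) \<Rightarrow> (nat \<Rightarrow> 'x) \<Rightarrow> nat \<Rightarrow> 'x set" where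
  "choquet_answer \<sigma> B f n = \<sigma> (map (\<lambda>i. (B i, f i)) [0..<Suc n])"

definition choquet_I_legal_upto ::
    "'x topology \<Rightarrow> (('x set \<times> 'x) list \<Rightarrow> 'x set) \<Rightarrow> (nat \<Rightarrow> 'x set) \<Rightarrow> (nat \<Rightarrow> 'x) \<Rightarrow> nat \<Rightarrow> bool" where
  "choquet_I_legal_upto T \<sigma> B f n \<longleftrightarrow>
     (\<forall>i\<le>n. openin T (B i) \<and> f i \<in> B i \<and>
              (0 < i \<longrightarrow> B i \<subseteq> choquet_answer \<sigma> B f (i - 1)))"

definition strong_choquet :: "'x topology \<Rightarrow> bool" where
  "strong_choquet T \<longleftrightarrow> (\<exists>\<sigma>.
     (\<forall>B f n. choquet_I_legal_upto T \<sigma> B f n \<longrightarrow>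
        openin T (choquet_answer \<sigma> B f n) \<and> f n \<in> choquet_answer \<sigma> B f n \<and>
        choquet_answer \<sigma> B f n \<subseteq> B n) \<and>
     (\<forall>B f. (\<forall>n. choquet_I_legal_upto T \<sigma> B f n) \<longrightarrow>
        (\<Inter>n. choquet_answer \<sigma> B f n) \<noteq> {}))"

definition is_base_of :: "'x topology \<Rightarrow> 'x set set \<Rightarrow> bool" where
  "is_base_of T \<B> \<longleftrightarrow> (\<forall>U\<in>\<B>. openin T U) \<and>
     (\<forall>U. openin T U \<longrightarrow> (\<exists>\<U>\<subseteq>\<B>. U = \<Union>\<U>))"

definition non_archimedean :: "'x topology \<Rightarrow> bool" where
  "non_archimedean T \<longleftrightarrow> (\<exists>\<B>. is_base_of T \<B> \<and>
     (\<forall>U\<in>\<B>. \<forall>V\<in>\<B>. U \<inter> V = {} \<or> U \<subseteq> V \<or> V \<subseteq> U))"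

definition dense_in :: "'x topology \<Rightarrow> 'x set \<Rightarrow> bool" where
  "dense_in T D \<longleftrightarrow> D \<subseteq> topspace T \<and> T closure_of D = topspace T"

definition baire_space :: "'x topology \<Rightarrow> bool" where
  "baire_space T \<longleftrightarrow> (\<forall>U :: nat \<Rightarrow> 'x set.
     (\<forall>n. openin T (U n) \<and> dense_in T (U n)) \<longrightarrow> dense_in T (\<Inter>n. U n) \<or> topspace T = {})"

definition paracompact_space :: "'x topology \<Rightarrow> bool" where
  "paracompact_space T \<longleftrightarrow> (\<forall>\<C>. (\<forall>C\<in>\<C>. openin T C) \<and> \<Union>\<C> = topspace T \<longrightarrow>
     (\<exists>\<D>. (\<forall>D\<in>\<D>. openin T D \<and> (\<exists>C\<in>\<C>. D \<subseteq> C)) \<and> \<Union>\<D> = topspace T \<and>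
          locally_finite_in T \<D>))"

definition hereditarily_paracompact :: "'x topology \<Rightarrow> bool" where
  "hereditarily_paracompact T \<longleftrightarrow>
     (\<forall>S. S \<subseteq> topspace T \<longrightarrow> paracompact_space (subtopology T S))"

definition dis_le :: "'x topology \<Rightarrow> 'b set \<Rightarrow> bool" where
  "dis_le T A \<longleftrightarrow> (\<exists>\<D>. \<Union>\<D> = topspace T \<and>
     (\<forall>D\<in>\<D>. D \<subseteq> topspace T \<and> subtopology T D = discrete_topology D) \<and> (card_of \<D>, card_of A) \<in> ordLeq)"

definition Delta_gt :: "'x topology \<Rightarrow> 'b set \<Rightarrow> bool" where
  "Delta_gt T A \<longleftrightarrow> (\<forall>U. openin T U \<and> U \<noteq> {} \<longrightarrow> (card_of A, card_of U) \<in> ordLess)"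

end

theory Submission
  imports Defs
begin

(* The space X of eventually-zero functions from lambda^+ to W = {-1} \<union> kappa, ordered
   lexicographically, is studied through its cylinders: for p in X and delta < lambda^+, the
   cylinder of p at delta is the set of points of X agreeing with p on [0, delta].

   Hence X is
     non-archimedean; least cylinders refining a cover give hereditary paracompactness; a
     decreasing sequence of cylinders has a common point (countably many coordinates are
     bounded), which gives a winning strategy in the strong Choquet game; the points with support
     below delta form discrete pieces; and a Koenig-type diagonalisation over a cofinal subset of
     kappa shows that every cylinder has more than kappa points.
   - The main theorem instantiates the locale with L = lambda^+. *)

unbundle cardinal_syntax

lemma well_order_refl: "Well_order r \<Longrightarrow> a \<in> Field r \<Longrightarrow> (a, a) \<in> r"
  by (simp add: order_on_defs refl_on_def)

lemma well_order_trans: "Well_order r \<Longrightarrow> (a, b) \<in> r \<Longrightarrow> (b, c) \<in> r \<Longrightarrow> (a, c) \<in> r"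
  unfolding order_on_defs trans_def by blast

lemma well_order_antisym: "Well_order r \<Longrightarrow> (a, b) \<in> r \<Longrightarrow> (b, a) \<in> r \<Longrightarrow> a = b"
  unfolding order_on_defs antisym_def by blast

lemma well_order_total:
  "Well_order r \<Longrightarrow> a \<in> Field r \<Longrightarrow> b \<in> Field r \<Longrightarrow> (a, b) \<in> r \<or> (b, a) \<in> r"
  using wo_rel.TOTALS[of r] unfolding wo_rel_def by blast

lemma well_order_least:
  assumes "Well_order r" "B \<subseteq> Field r" "B \<noteq> {}"
  shows "\<exists>m\<in>B. \<forall>b\<in>B. (m, b) \<in> r"
proof -
  have w: "wo_rel r" using assms(1) unfolding wo_rel_def .
  show ?thesis using wo_rel.minim_in[OF w assms(2,3)] wo_rel.minim_least[OF w assms(2)] by blast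
qed

lemma well_order_not_le: "Well_order r \<Longrightarrow> a \<in> Field r \<Longrightarrow> b \<in> Field r \<Longrightarrow> (a, b) \<notin> r \<Longrightarrow> b \<in> underS r a"
  unfolding underS_def using well_order_total well_order_refl by fastforce

section \<open>Successor cardinals\<close>

lemma countable_card_le_infinite:
  assumes "countable A" "infinite B"
  shows "|A| \<le>o |B|"
proof -
  obtain f :: "_ \<Rightarrow> nat" where "inj_on f A" using assms(1) unfolding countable_def by blast
  hence "|A| \<le>o |UNIV :: nat set|" using card_of_ordLeq[of A "UNIV :: nat set"] by blast
  moreover have "|UNIV :: nat set| \<le>o |B|" using infinite_iff_card_of_nat assms(2) by blast
  ultimately show ?thesis by (rule ordLeq_transitive)
qed

lemma card_of_insert_le_infinite:
  assumes "infinite A" "|B| \<le>o |A|"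
  shows "|insert b B| \<le>o |A|"
proof -
  have "|{b}| \<le>o |A|" using assms(1) by (metis card_of_singl_ordLeq finite.emptyI)
  thus ?thesis
    using card_of_Un_ordLeq_infinite_Field[of "|A|" "{b}" B] assms
    by (simp add: Field_card_of card_of_card_order_on)
qed

lemma card_of_under_le:
  assumes l: "Card_order l" "infinite (Field l)"
    and r: "Card_order r" "r \<le>o cardSuc l" and t: "t \<in> Field r"
  shows "|under r t| \<le>o |Field l|"
proof -
  have "|underS r t| <o cardSuc l" using ordLess_ordLeq_trans[OF card_of_underS[OF r(1) t] r(2)] .
  hence "|underS r t| \<le>o l" using cardSuc_ordLeq_ordLess[OF l(1) card_of_Card_order] by blast
  hence "|underS r t| \<le>o |Field l|"
    using ordLeq_ordIso_trans ordIso_symmetric[OF card_of_Field_ordIso[OF l(1)]] by blast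
  moreover have "Refl r" using r(1) unfolding card_order_on_def order_on_defs by blast
  hence "under r t = insert t (underS r t)" using Refl_under_underS[OF _ t] by simp
  ultimately show ?thesis using card_of_insert_le_infinite[OF l(2)] by simp
qed

lemma Card_order_le_of_Field_le:
  assumes "Card_order r" "Card_order s" "|Field r| \<le>o |Field s|"
  shows "r \<le>o s"
  using ordIso_ordLeq_trans[OF ordIso_symmetric[OF card_of_Field_ordIso[OF assms(1)]]
      ordLeq_ordIso_trans[OF assms(3) card_of_Field_ordIso[OF assms(2)]]] .

lemma Field_cardSuc_not_le:
  assumes l: "Card_order l"
  shows "\<not> |Field (cardSuc l)| \<le>o |Field l|"
proof
  assume "|Field (cardSuc l)| \<le>o |Field l|"
  hence "cardSuc l \<le>o l" by (rule Card_order_le_of_Field_le[OF cardSuc_Card_order[OF l] l])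
  thus False using cardSuc_greater[OF l] not_ordLess_ordLeq by blast
qed

text \<open>Regularity of lambda^+: a subset of size at most lambda has a strict upper bound, since
  the union of the initial segments below its elements has size at most lambda.\<close>
lemma cardSuc_small_bounded:
  assumes l: "Card_order l" "infinite (Field l)"
    and T: "T \<subseteq> Field (cardSuc l)" "|T| \<le>o |Field l|"
  shows "\<exists>\<eta>\<in>Field (cardSuc l). T \<subseteq> underS (cardSuc l) \<eta>"
proof -
  let ?L = "cardSuc l"
  have W: "Well_order ?L" using cardSuc_Well_order[OF l(1)] .
  have "\<forall>t\<in>T. |under ?L t| \<le>o |Field l|"
    using card_of_under_le[OF l cardSuc_Card_order[OF l(1)] ordLeq_refl[OF cardSuc_Card_order[OF l(1)]]] T(1)
    by blast
  hence "|\<Union>t\<in>T. under ?L t| \<le>o |Field l|" by (rule card_of_UNION_ordLeq_infinite[OF l(2) T(2)])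
  hence "\<not> Field ?L \<subseteq> (\<Union>t\<in>T. under ?L t)"
    using Field_cardSuc_not_le[OF l(1)] ordLeq_transitive[OF card_of_mono1] by blast
  then obtain \<eta> where \<eta>: "\<eta> \<in> Field ?L" "\<eta> \<notin> (\<Union>t\<in>T. under ?L t)" by blast
  have "T \<subseteq> underS ?L \<eta>"
  proof
    fix t assume "t \<in> T"
    hence "(\<eta>, t) \<notin> ?L" "t \<in> Field ?L" using \<eta>(2) T(1) by (auto simp: under_def)
    thus "t \<in> underS ?L \<eta>" using well_order_not_le[OF W \<eta>(1)] by blast
  qed
  thus ?thesis using \<eta>(1) by blast
qed

text \<open>If cf(kappa) \<le> lambda < kappa then lambda^+ < kappa: otherwise kappa = lambda^+ would be a
  union of at most lambda initial segments, each of size at most lambda.\<close>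
lemma cardSuc_less_of_cf_le:
  assumes k: "Card_order k" and l: "Card_order l" "infinite (Field l)"
    and cf: "cf_le k (Field l)" and lk: "l <o k"
  shows "cardSuc l <o k"
proof -
  have "\<not> k \<le>o cardSuc l"
  proof
    assume k_le: "k \<le>o cardSuc l"
    obtain S where S: "cofinal_in k S" "|S| \<le>o |Field l|" using cf unfolding cf_le_def by blast
    have "\<forall>t\<in>S. |under k t| \<le>o |Field l|"
      using card_of_under_le[OF l k k_le] S(1) unfolding cofinal_in_def by blast
    hence "|\<Union>t\<in>S. under k t| \<le>o |Field l|" by (rule card_of_UNION_ordLeq_infinite[OF l(2) S(2)])
    moreover have "Field k \<subseteq> (\<Union>t\<in>S. under k t)"
      using S(1) unfolding cofinal_in_def under_def by blast
    ultimately have "|Field k| \<le>o |Field l|" using ordLeq_transitive[OF card_of_mono1] by blast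
    hence "k \<le>o l" using Card_order_le_of_Field_le[OF k l(1)] by blast
    thus False using lk not_ordLess_ordLeq by blast
  qed
  thus ?thesis
    using not_ordLeq_iff_ordLess[OF cardSuc_Well_order[OF l(1)] card_order_on_well_order_on[OF k]]
    by blast
qed

lemma cardSuc_aboveS_large:
  assumes l: "Card_order l" "infinite (Field l)" and \<delta>: "\<delta> \<in> Field (cardSuc l)"
  shows "|Field l| <o |aboveS (cardSuc l) \<delta>|"
proof -
  let ?L = "cardSuc l" and ?R = "aboveS (cardSuc l) \<delta>"
  have W: "Well_order ?L" using cardSuc_Well_order[OF l(1)] .
  have "\<not> |?R| \<le>o |Field l|"
  proof
    assume R: "|?R| \<le>o |Field l|"
    have "|under ?L \<delta>| \<le>o |Field l|"
      using card_of_under_le[OF l cardSuc_Card_order[OF l(1)] ordLeq_refl[OF cardSuc_Card_order[OF l(1)]] \<delta>] .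
    hence "|?R \<union> under ?L \<delta>| \<le>o |Field l|"
      using card_of_Un_ordLeq_infinite_Field[of "|Field l|", OF _ R _ card_of_Card_order] l(2)
      by (simp add: Field_card_of)
    moreover have "Field ?L \<subseteq> ?R \<union> under ?L \<delta>"
    proof
      fix x assume x: "x \<in> Field ?L"
      show "x \<in> ?R \<union> under ?L \<delta>"
      proof (cases "(x, \<delta>) \<in> ?L")
        case False
        thus ?thesis using well_order_not_le[OF W x \<delta>] unfolding aboveS_def underS_def by blast
      qed (simp add: under_def)
    qed
    ultimately show False
      using Field_cardSuc_not_le[OF l(1)] ordLeq_transitive[OF card_of_mono1] by blast
  qed
  thus ?thesis using not_ordLeq_iff_ordLess[OF card_of_Well_order card_of_Well_order] by blast
qed

text \<open>Above any point of lambda^+ there is a bounded injective copy of any set of size at most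
  lambda.  This is what the diagonal argument for Delta(X) > kappa needs.\<close>
lemma cardSuc_embed_above:
  assumes l: "Card_order l" "infinite (Field l)"
    and \<delta>: "\<delta> \<in> Field (cardSuc l)" and S: "|S| \<le>o |Field l|"
  shows "\<exists>e. inj_on e S \<and> e ` S \<subseteq> aboveS (cardSuc l) \<delta> \<and>
           (\<exists>\<eta>\<in>Field (cardSuc l). e ` S \<subseteq> underS (cardSuc l) \<eta>)"
proof -
  let ?L = "cardSuc l" and ?R = "aboveS (cardSuc l) \<delta>"
  have "|S| \<le>o |?R|" using ordLess_imp_ordLeq[OF ordLeq_ordLess_trans[OF S cardSuc_aboveS_large[OF l \<delta>]]] .
  then obtain e where e: "inj_on e S" "e ` S \<subseteq> ?R" using card_of_ordLeq[of S ?R] by blast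
  have eF: "e ` S \<subseteq> Field ?L"
  proof
    fix x assume "x \<in> e ` S"
    hence "(\<delta>, x) \<in> ?L" using e(2) unfolding aboveS_def by blast
    thus "x \<in> Field ?L" by (rule FieldI2)
  qed
  have "|e ` S| \<le>o |Field l|" using ordLeq_transitive[OF card_of_image S] .
  then obtain \<eta> where "\<eta> \<in> Field ?L" "e ` S \<subseteq> underS ?L \<eta>"
    using cardSuc_small_bounded[OF l eF] by blast
  thus ?thesis using e by blast
qed

lemma card_of_under_less:
  assumes k: "Card_order k" "infinite (Field k)" and s: "s \<in> Field k"
  shows "|under k s| <o |Field k|"
proof -
  have "|{s}| <o k"
    using finite_ordLess_infinite[OF card_of_Well_order[of "{s}"] card_order_on_well_order_on[OF k(1)]] k(2)
    by (simp add: Field_card_of)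
  hence "|{s} \<union> underS k s| <o k"
    using card_of_Un_ordLess_infinite_Field[OF k(2) k(1) _ card_of_underS[OF k(1) s]] by blast
  moreover have "Refl k" using k(1) unfolding card_order_on_def order_on_defs by blast
  hence "under k s = {s} \<union> underS k s" using Refl_under_underS[OF _ s] by auto
  ultimately show ?thesis
    using ordLess_ordIso_trans ordIso_symmetric[OF card_of_Field_ordIso[OF k(1)]] by metis
qed

section \<open>General topology\<close>

lemma locally_finite_in_disjoint_open_cover:
  assumes "\<And>D. D \<in> \<D> \<Longrightarrow> openin T D" "\<Union>\<D> = topspace T"
    and "\<And>D D'. D \<in> \<D> \<Longrightarrow> D' \<in> \<D> \<Longrightarrow> D \<inter> D' \<noteq> {} \<Longrightarrow> D = D'"
  shows "locally_finite_in T \<D>"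
  unfolding locally_finite_in_def
proof (intro conjI ballI)
  show "\<Union>\<D> \<subseteq> topspace T" using assms(2) by simp
  fix x assume "x \<in> topspace T"
  then obtain D where D: "D \<in> \<D>" "x \<in> D" using assms(2) by blast
  have "{U \<in> \<D>. U \<inter> D \<noteq> {}} \<subseteq> {D}" using assms(3) D(1) by blast
  hence "finite {U \<in> \<D>. U \<inter> D \<noteq> {}}" by (rule finite_subset) simp
  thus "\<exists>V. openin T V \<and> x \<in> V \<and> finite {U \<in> \<D>. U \<inter> V \<noteq> {}}" using assms(1) D by blast
qed

lemma recursive_history:
  fixes step :: "nat \<Rightarrow> 'm list \<Rightarrow> 'm" and m0 :: 'm
  defines "h \<equiv> rec_nat [m0] (\<lambda>n hs. hs @ [step n hs])"
  shows "map (\<lambda>i. last (h i)) [0..<Suc n] = h n"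
proof (induction n)
  case 0 show ?case by (simp add: h_def)
next
  case (Suc n)
  have "h (Suc n) = h n @ [step n (h n)]" by (simp add: h_def)
  also have "\<dots> = map (\<lambda>i. last (h i)) [0..<Suc n] @ [last (h (Suc n))]"
    using Suc by (simp add: h_def)
  finally show ?case by simp
qed

lemma dense_in_meets:
  assumes "dense_in T D" "openin T V" "V \<noteq> {}"
  shows "D \<inter> V \<noteq> {}"
proof -
  obtain x where x: "x \<in> V" using assms(3) by blast
  hence "x \<in> T closure_of D"
    using openin_subset[OF assms(2)] assms(1) unfolding dense_in_def by auto
  thus ?thesis using x assms(2) unfolding in_closure_of by blast
qed

text \<open>Against any legal strategy of player II, player I can play inside a given nonempty open
  set V and then inside U n in round n, when all U n are open and dense: II's answer is a
  nonempty open set, so it meets the next U n.\<close>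
lemma choquet_play_through_dense:
  fixes U :: "nat \<Rightarrow> 'x set"
  assumes answer_ok: "\<And>B f n. choquet_I_legal_upto T \<sigma> B f n \<Longrightarrow>
        openin T (choquet_answer \<sigma> B f n) \<and> f n \<in> choquet_answer \<sigma> B f n"
    and U: "\<And>n. openin T (U n)" "\<And>n. dense_in T (U n)" and V: "openin T V" "V \<noteq> {}"
  shows "\<exists>B f. (\<forall>n. choquet_I_legal_upto T \<sigma> B f n) \<and> B 0 \<subseteq> V \<and> (\<forall>n. B n \<subseteq> U n)"
proof -
  define move where "move S = (S, SOME y. y \<in> S)" for S :: "'x set"
  define h where "h = rec_nat [move (V \<inter> U 0)] (\<lambda>n hs. hs @ [move (\<sigma> hs \<inter> U (Suc n))])"
  define B where "B i = fst (last (h i))" for i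
  define f where "f i = snd (last (h i))" for i
  have "map (\<lambda>i. (B i, f i)) [0..<Suc n] = h n" for n
    using recursive_history[of "move (V \<inter> U 0)" "\<lambda>n hs. move (\<sigma> hs \<inter> U (Suc n))" n]
    unfolding h_def B_def f_def by simp
  hence answer: "choquet_answer \<sigma> B f n = \<sigma> (h n)" for n unfolding choquet_answer_def by simp
  have B0: "B 0 = V \<inter> U 0" and f0: "f 0 = (SOME y. y \<in> V \<inter> U 0)"
    by (simp_all add: B_def f_def h_def move_def)
  have BS: "B (Suc n) = choquet_answer \<sigma> B f n \<inter> U (Suc n)"
    and fS: "f (Suc n) = (SOME y. y \<in> choquet_answer \<sigma> B f n \<inter> U (Suc n))" for n
  proof -
    have "last (h (Suc n)) = move (\<sigma> (h n) \<inter> U (Suc n))" by (simp add: h_def)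
    thus "B (Suc n) = choquet_answer \<sigma> B f n \<inter> U (Suc n)"
      "f (Suc n) = (SOME y. y \<in> choquet_answer \<sigma> B f n \<inter> U (Suc n))"
      unfolding answer B_def f_def move_def by simp_all
  qed
  have legal: "choquet_I_legal_upto T \<sigma> B f n" for n
  proof (induction n)
    case 0
    have "U 0 \<inter> V \<noteq> {}" using dense_in_meets U V by blast
    hence "f 0 \<in> B 0" unfolding B0 f0 by (metis Int_commute some_in_eq)
    thus ?case using U V(1) B0 unfolding choquet_I_legal_upto_def by auto
  next
    case (Suc n)
    note A = answer_ok[OF Suc]
    have "U (Suc n) \<inter> choquet_answer \<sigma> B f n \<noteq> {}" using dense_in_meets U A by blast
    hence "f (Suc n) \<in> B (Suc n)" unfolding BS fS by (metis Int_commute some_in_eq)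
    moreover have "openin T (B (Suc n))" using A U unfolding BS by blast
    ultimately show ?case using Suc BS unfolding choquet_I_legal_upto_def by (auto simp: le_Suc_eq)
  qed
  moreover have "B n \<subseteq> U n" for n by (cases n) (simp_all add: B0 BS)
  ultimately show ?thesis using B0 by blast
qed

text \<open>Strong Choquet spaces are Baire: playing I through the dense open sets inside a given
  open set, the point that II's winning strategy guarantees lies in all of them.\<close>
lemma strong_choquet_imp_baire:
  assumes "strong_choquet T"
  shows "baire_space T"
  unfolding baire_space_def
proof (intro allI impI disjI1)
  fix U :: "nat \<Rightarrow> 'a set"
  assume U: "\<forall>n. openin T (U n) \<and> dense_in T (U n)"
  obtain \<sigma> where
    answer_ok: "\<And>B f n. choquet_I_legal_upto T \<sigma> B f n \<Longrightarrow>
        openin T (choquet_answer \<sigma> B f n) \<and> f n \<in> choquet_answer \<sigma> B f n \<and>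
        choquet_answer \<sigma> B f n \<subseteq> B n" and
    wins: "\<And>B f. (\<forall>n. choquet_I_legal_upto T \<sigma> B f n) \<Longrightarrow> (\<Inter>n. choquet_answer \<sigma> B f n) \<noteq> {}"
    using assms unfolding strong_choquet_def by blast
  have meets: "\<exists>y. y \<in> V \<and> (\<forall>n. y \<in> U n)" if V: "openin T V" "V \<noteq> {}" for V
  proof -
    have "\<exists>B f. (\<forall>n. choquet_I_legal_upto T \<sigma> B f n) \<and> B 0 \<subseteq> V \<and> (\<forall>n. B n \<subseteq> U n)"
      by (rule choquet_play_through_dense) (use answer_ok U V in auto)
    then obtain B f where legal: "\<forall>n. choquet_I_legal_upto T \<sigma> B f n" and "B 0 \<subseteq> V" "\<forall>n. B n \<subseteq> U n"
      by blast
    moreover obtain y where "y \<in> (\<Inter>n. choquet_answer \<sigma> B f n)" using wins[OF legal] by blast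
    moreover have "choquet_answer \<sigma> B f n \<subseteq> B n" for n using answer_ok legal by blast
    ultimately show ?thesis by blast
  qed
  show "dense_in T (\<Inter>n. U n)"
    unfolding dense_in_def
  proof
    show "(\<Inter>n. U n) \<subseteq> topspace T" using U openin_subset by blast
    show "T closure_of (\<Inter>n. U n) = topspace T"
      using meets by (auto simp: in_closure_of closure_of_subset_topspace[THEN subsetD]) (metis empty_iff)
  qed
qed

lemma W_less_simps [simp]:
  "W_less k None y \<longleftrightarrow> y \<noteq> None"
  "W_less k x None \<longleftrightarrow> False"
  "W_less k (Some a) (Some b) \<longleftrightarrow> (a, b) \<in> k \<and> a \<noteq> b"
  unfolding W_less_def by (auto split: option.splits)

lemma W_less_irrefl: "\<not> W_less k x x"
  by (cases x) auto

lemma W_less_trans: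
  assumes k: "Well_order k" and xy: "W_less k x y" and yz: "W_less k y z"
  shows "W_less k x z"
proof (cases x)
  case (Some a)
  obtain b c where y: "y = Some b" and z: "z = Some c" using xy yz by (cases y; cases z) auto
  have ab: "(a, b) \<in> k" "a \<noteq> b" and bc: "(b, c) \<in> k" "b \<noteq> c" using xy yz Some y z by auto
  have "a \<noteq> c" using well_order_antisym[OF k ab(1)] bc ab by blast
  thus ?thesis using well_order_trans[OF k ab(1) bc(1)] Some z by simp
qed (use yz in \<open>cases z; auto\<close>)

lemma W_less_total:
  assumes k: "Well_order k" and "x \<in> W_set k" "y \<in> W_set k" "x \<noteq> y"
  shows "W_less k x y \<or> W_less k y x"
  using assms well_order_total[OF k] unfolding W_set_def by (cases x; cases y) auto

section \<open>The lexicographic space\<close>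

text \<open>The setting: kappa is an infinite cardinal and L a well-order in which every countable
  set is strictly bounded (L = lambda^+ in the application).\<close>
locale lex_space =
  fixes k :: "'a rel" and L :: "'i rel"
  assumes k_card: "Card_order k" and k_infinite: "infinite (Field k)"
    and L_wo: "Well_order L"
    and L_countably_bounded: "\<And>A. A \<subseteq> Field L \<Longrightarrow> countable A \<Longrightarrow> \<exists>\<eta>\<in>Field L. A \<subseteq> underS L \<eta>"
begin

abbreviation "X \<equiv> Xspace k L"
abbreviation "lt \<equiv> lex_less k L"
abbreviation "zero \<equiv> ord_zero k"

lemma k_wo: "Well_order k"
  using k_card unfolding card_order_on_def by blast

lemma zero_in: "zero \<in> Field k" and zero_least: "a \<in> Field k \<Longrightarrow> (zero, a) \<in> k"
proof -
  have ne: "Field k \<noteq> {}" and wo: "wo_rel k" using k_infinite k_wo unfolding wo_rel_def by auto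
  show "zero \<in> Field k" unfolding ord_zero_def using wo_rel.minim_in[OF wo _ ne] by blast
  show "a \<in> Field k \<Longrightarrow> (zero, a) \<in> k"
    unfolding ord_zero_def using wo_rel.minim_least[OF wo] by blast
qed

lemma exists_above_zero: "\<exists>c\<in>Field k. W_less k (Some zero) (Some c)"
proof -
  obtain c where "c \<in> Field k" "c \<noteq> zero" using k_infinite zero_in
    by (metis finite.emptyI finite_insert insert_iff subsetI finite_subset)
  moreover have "W_less k (Some zero) (Some c)" using zero_least[OF \<open>c \<in> Field k\<close>] \<open>c \<noteq> zero\<close> by simp
  ultimately show ?thesis by blast
qed

lemma L_unbounded_pair:
  "\<alpha> \<in> Field L \<Longrightarrow> \<beta> \<in> Field L \<Longrightarrow> \<exists>\<eta>\<in>Field L. \<alpha> \<in> underS L \<eta> \<and> \<beta> \<in> underS L \<eta>"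
  using L_countably_bounded[of "{\<alpha>, \<beta>}"] by auto

lemma X_memD:
  assumes "f \<in> X"
  shows "\<alpha> \<in> Field L \<Longrightarrow> f \<alpha> \<in> W_set k" and "\<alpha> \<notin> Field L \<Longrightarrow> f \<alpha> = None"
    and "\<exists>\<gamma>\<in>Field L. \<forall>\<alpha>\<in>Field L. (\<gamma>, \<alpha>) \<in> L \<longrightarrow> f \<alpha> = Some zero"
  using assms unfolding Xspace_def by blast+

text \<open>Changing one coordinate keeps a point in X (the support bound is pushed above it).\<close>
lemma X_update:
  assumes f: "f \<in> X" and w: "w \<in> Field L" and v: "v \<in> W_set k"
  shows "f(w := v) \<in> X"
proof -
  obtain \<gamma> where \<gamma>: "\<gamma> \<in> Field L" "\<forall>\<alpha>\<in>Field L. (\<gamma>, \<alpha>) \<in> L \<longrightarrow> f \<alpha> = Some zero"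
    using X_memD(3)[OF f] by blast
  obtain \<eta> where \<eta>: "\<eta> \<in> Field L" "\<gamma> \<in> underS L \<eta>" "w \<in> underS L \<eta>"
    using L_unbounded_pair[OF \<gamma>(1) w] by blast
  have "\<forall>\<alpha>\<in>Field L. (\<eta>, \<alpha>) \<in> L \<longrightarrow> (f(w := v)) \<alpha> = Some zero"
  proof (intro ballI impI)
    fix \<alpha> assume that: "\<alpha> \<in> Field L" "(\<eta>, \<alpha>) \<in> L"
    have "\<alpha> \<noteq> w" using \<eta>(3) that(2) well_order_antisym[OF L_wo] unfolding underS_def by blast
    moreover have "(\<gamma>, \<alpha>) \<in> L" using \<eta>(2) that(2) well_order_trans[OF L_wo] unfolding underS_def by blast
    ultimately show "(f(w := v)) \<alpha> = Some zero" using \<gamma>(2) that(1) by simp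
  qed
  moreover have "\<forall>\<alpha>\<in>Field L. (f(w := v)) \<alpha> \<in> W_set k" "\<forall>\<alpha>. \<alpha> \<notin> Field L \<longrightarrow> (f(w := v)) \<alpha> = None"
    using X_memD(1,2)[OF f] w v by auto
  ultimately show ?thesis using \<eta>(1) unfolding Xspace_def by blast
qed

lemma lex_less_irrefl: "\<not> lt f f"
  unfolding lex_less_def using W_less_irrefl by blast

lemma underS_trans: "a \<in> underS L b \<Longrightarrow> (b, c) \<in> L \<Longrightarrow> a \<in> underS L c"
  unfolding underS_def using well_order_trans[OF L_wo] well_order_antisym[OF L_wo] by blast

lemma le_underS_trans: "(a, b) \<in> L \<Longrightarrow> b \<in> underS L c \<Longrightarrow> a \<in> underS L c"
  unfolding underS_def using well_order_trans[OF L_wo] well_order_antisym[OF L_wo] by blast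

lemma lex_lessI:
  "\<alpha> \<in> Field L \<Longrightarrow> W_less k (f \<alpha>) (g \<alpha>) \<Longrightarrow> (\<And>\<beta>. \<beta> \<in> underS L \<alpha> \<Longrightarrow> f \<beta> = g \<beta>) \<Longrightarrow> lt f g"
  unfolding lex_less_def underS_def by blast

lemma lex_less_witness:
  "lt f g \<Longrightarrow> \<exists>\<alpha>\<in>Field L. W_less k (f \<alpha>) (g \<alpha>) \<and> (\<forall>\<beta>\<in>underS L \<alpha>. f \<beta> = g \<beta>)"
  unfolding lex_less_def underS_def by blast

text \<open>Transitivity: f < h is decided at the smaller of the two deciding coordinates.\<close>
lemma lex_less_trans:
  assumes fg: "lt f g" and gh: "lt g h"
  shows "lt f h"
proof -
  obtain \<alpha> where \<alpha>: "\<alpha> \<in> Field L" "W_less k (f \<alpha>) (g \<alpha>)" "\<forall>\<gamma>\<in>underS L \<alpha>. f \<gamma> = g \<gamma>"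
    using lex_less_witness[OF fg] by blast
  obtain \<beta> where \<beta>: "\<beta> \<in> Field L" "W_less k (g \<beta>) (h \<beta>)" "\<forall>\<gamma>\<in>underS L \<beta>. g \<gamma> = h \<gamma>"
    using lex_less_witness[OF gh] by blast
  consider "\<alpha> = \<beta>" | "\<alpha> \<in> underS L \<beta>" | "\<beta> \<in> underS L \<alpha>"
    using well_order_total[OF L_wo \<alpha>(1) \<beta>(1)] unfolding underS_def by blast
  thus ?thesis
  proof cases
    case 1
    thus ?thesis using W_less_trans[OF k_wo \<alpha>(2)] \<alpha> \<beta> by (intro lex_lessI[of \<alpha>]) auto
  next
    case 2
    hence "(\<alpha>, \<beta>) \<in> L" unfolding underS_def by blast
    thus ?thesis using \<alpha> \<beta>(3) 2 underS_trans by (intro lex_lessI[of \<alpha>]) auto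
  next
    case 3
    hence "(\<beta>, \<alpha>) \<in> L" unfolding underS_def by blast
    thus ?thesis using \<beta> \<alpha>(3) 3 underS_trans by (intro lex_lessI[of \<beta>]) auto
  qed
qed

text \<open>Two distinct points of X are compared at the least coordinate where they differ.\<close>
lemma lex_less_total:
  assumes f: "f \<in> X" and g: "g \<in> X" and ne: "f \<noteq> g"
  shows "lt f g \<or> lt g f"
proof -
  let ?D = "{\<xi>\<in>Field L. f \<xi> \<noteq> g \<xi>}"
  have "?D \<noteq> {}" using ne X_memD(2)[OF f] X_memD(2)[OF g] by fastforce
  then obtain m where m: "m \<in> ?D" "\<And>\<xi>. \<xi> \<in> ?D \<Longrightarrow> (m, \<xi>) \<in> L"
    using well_order_least[OF L_wo, of ?D] by blast
  have mF: "m \<in> Field L" "f m \<noteq> g m" using m(1) by auto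
  have below: "f \<beta> = g \<beta>" if \<beta>: "\<beta> \<in> underS L m" for \<beta>
  proof (rule ccontr)
    assume "f \<beta> \<noteq> g \<beta>"
    moreover have "\<beta> \<noteq> m" "(\<beta>, m) \<in> L" using \<beta> unfolding underS_def by auto
    moreover have "\<beta> \<in> Field L" using \<open>(\<beta>, m) \<in> L\<close> by (rule FieldI1)
    ultimately have "(m, \<beta>) \<in> L" using m(2) by blast
    thus False using well_order_antisym[OF L_wo _ \<open>(\<beta>, m) \<in> L\<close>] \<open>\<beta> \<noteq> m\<close> by blast
  qed
  have "W_less k (f m) (g m) \<or> W_less k (g m) (f m)"
    using W_less_total[OF k_wo X_memD(1)[OF f mF(1)] X_memD(1)[OF g mF(1)] mF(2)] .
  thus ?thesis
  proof
    assume "W_less k (f m) (g m)"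
    hence "lt f g" by (rule lex_lessI[OF mF(1)]) (simp add: below)
    thus ?thesis ..
  next
    assume "W_less k (g m) (f m)"
    hence "lt g f" by (rule lex_lessI[OF mF(1)]) (simp add: below)
    thus ?thesis ..
  qed
qed

theorem lex_strict_linear: "strict_linear_on X lt"
  unfolding strict_linear_on_def using lex_less_irrefl lex_less_trans lex_less_total by blast

section \<open>Cylinders\<close>

definition agree_upto :: "'i \<Rightarrow> ('i \<Rightarrow> 'a option) \<Rightarrow> ('i \<Rightarrow> 'a option) \<Rightarrow> bool" where
  "agree_upto \<delta> f g \<longleftrightarrow> (\<forall>\<beta>. (\<beta>, \<delta>) \<in> L \<longrightarrow> f \<beta> = g \<beta>)"

text \<open>The cylinder of p at delta: all points of X extending p restricted to [0, delta].
  These cylinders will be the canonical non-archimedean base of the order topology.\<close>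
definition cylinder :: "'i \<Rightarrow> ('i \<Rightarrow> 'a option) \<Rightarrow> ('i \<Rightarrow> 'a option) set" where
  "cylinder \<delta> p = {h \<in> X. agree_upto \<delta> h p}"

lemma cylinder_subset: "cylinder \<delta> p \<subseteq> X"
  unfolding cylinder_def by blast

lemma mem_cylinder_self: "p \<in> X \<Longrightarrow> p \<in> cylinder \<delta> p"
  unfolding cylinder_def agree_upto_def by blast

lemma cylinder_eq_of_mem: "h \<in> cylinder \<delta> p \<Longrightarrow> cylinder \<delta> h = cylinder \<delta> p"
  unfolding cylinder_def agree_upto_def by auto

lemma agree_upto_refl [simp]: "agree_upto \<delta> f f"
  unfolding agree_upto_def by simp

lemma agree_upto_mono: "agree_upto \<epsilon> f g \<Longrightarrow> (\<delta>, \<epsilon>) \<in> L \<Longrightarrow> agree_upto \<delta> f g"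
  unfolding agree_upto_def using well_order_trans[OF L_wo] by blast

lemma cylinder_antimono: "(\<delta>, \<epsilon>) \<in> L \<Longrightarrow> cylinder \<epsilon> p \<subseteq> cylinder \<delta> p"
  unfolding cylinder_def using agree_upto_mono by blast

lemma cylinders_nested_or_disjoint:
  assumes "\<delta> \<in> Field L" "\<epsilon> \<in> Field L"
  shows "cylinder \<delta> p \<inter> cylinder \<epsilon> q = {} \<or> cylinder \<delta> p \<subseteq> cylinder \<epsilon> q \<or> cylinder \<epsilon> q \<subseteq> cylinder \<delta> p"
proof (cases "cylinder \<delta> p \<inter> cylinder \<epsilon> q = {}")
  case False
  then obtain h where "h \<in> cylinder \<delta> p" "h \<in> cylinder \<epsilon> q" by blast
  hence "cylinder \<delta> p = cylinder \<delta> h" "cylinder \<epsilon> q = cylinder \<epsilon> h" using cylinder_eq_of_mem by metis+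
  thus ?thesis using well_order_total[OF L_wo assms] cylinder_antimono by metis
qed simp

text \<open>The lexicographic comparison of f and g is decided at a single coordinate alpha, so it
  persists when f and g are replaced by points agreeing with them up to alpha.\<close>
lemma lex_less_local:
  assumes \<alpha>: "\<alpha> \<in> Field L" "W_less k (f \<alpha>) (g \<alpha>)" "\<forall>\<beta>\<in>underS L \<alpha>. f \<beta> = g \<beta>"
    and f': "agree_upto \<alpha> f' f" and g': "agree_upto \<alpha> g' g"
  shows "lt f' g'"
proof (rule lex_lessI[OF \<alpha>(1)])
  show "W_less k (f' \<alpha>) (g' \<alpha>)"
    using \<alpha>(2) f' g' well_order_refl[OF L_wo \<alpha>(1)] unfolding agree_upto_def by simp
  fix \<beta> assume "\<beta> \<in> underS L \<alpha>"
  moreover from this have "(\<beta>, \<alpha>) \<in> L" unfolding underS_def by blast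
  ultimately show "f' \<beta> = g' \<beta>" using \<alpha>(3) f' g' unfolding agree_upto_def by simp
qed

lemma lex_less_upto_cases:
  assumes fg: "lt f g" and \<delta>: "\<delta> \<in> Field L"
  shows "agree_upto \<delta> f g \<or> (\<forall>f' g'. agree_upto \<delta> f' f \<longrightarrow> agree_upto \<delta> g' g \<longrightarrow> lt f' g')"
proof -
  obtain \<alpha> where \<alpha>: "\<alpha> \<in> Field L" "W_less k (f \<alpha>) (g \<alpha>)" "\<forall>\<beta>\<in>underS L \<alpha>. f \<beta> = g \<beta>"
    using lex_less_witness[OF fg] by blast
  show ?thesis
  proof (cases "(\<alpha>, \<delta>) \<in> L")
    case True
    thus ?thesis using lex_less_local[OF \<alpha>] agree_upto_mono by blast
  next
    case False
    have "\<beta> \<in> underS L \<alpha>" if "(\<beta>, \<delta>) \<in> L" for \<beta>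
      using le_underS_trans[OF that well_order_not_le[OF L_wo \<alpha>(1) \<delta> False]] .
    hence "agree_upto \<delta> f g" using \<alpha>(3) unfolding agree_upto_def by blast
    thus ?thesis ..
  qed
qed

abbreviation "XT \<equiv> order_topology_on X lt"

lemma topspace_XT: "topspace XT = X"
  unfolding order_topology_on_def by auto

lemma openin_XT_subset: "openin XT U \<Longrightarrow> U \<subseteq> X"
  using openin_subset[of XT U] unfolding topspace_XT .

lemma openin_ray_below: "a \<in> X \<Longrightarrow> openin XT {y\<in>X. lt y a}"
  unfolding order_topology_on_def by (rule topology_generated_by_Basis) blast

lemma openin_ray_above: "a \<in> X \<Longrightarrow> openin XT {y\<in>X. lt a y}"
  unfolding order_topology_on_def by (rule topology_generated_by_Basis) blast

text \<open>Every open set contains a cylinder around each of its points: this holds for the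
  subbasic rays because comparisons are decided at one coordinate, and is preserved
  under finite intersections and unions.\<close>
lemma open_contains_cylinder:
  assumes "openin XT U" "h \<in> U"
  shows "\<exists>\<delta>\<in>Field L. cylinder \<delta> h \<subseteq> U"
proof -
  have "generate_topology_on (insert X ({{y\<in>X. lt y a} | a. a \<in> X} \<union> {{y\<in>X. lt a y} | a. a \<in> X})) U"
    using assms(1) unfolding order_topology_on_def openin_topology_generated_by_iff .
  thus ?thesis using assms(2)
  proof (induction arbitrary: h)
    case Empty thus ?case by simp
  next
    case (Int U V)
    then obtain \<delta> \<epsilon> where "\<delta> \<in> Field L" "cylinder \<delta> h \<subseteq> U" "\<epsilon> \<in> Field L" "cylinder \<epsilon> h \<subseteq> V"
      by blast
    thus ?case using well_order_total[OF L_wo, of \<delta> \<epsilon>] cylinder_antimono[of \<delta> \<epsilon> h] cylinder_antimono[of \<epsilon> \<delta> h]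
      by blast
  next
    case (UN K) thus ?case by blast
  next
    case (Basis s)
    consider "s = X" | a where "a \<in> X" "s = {y\<in>X. lt y a}" | a where "a \<in> X" "s = {y\<in>X. lt a y}"
      using Basis(1) by blast
    thus ?case
    proof cases
      case 1
      obtain \<delta> where "\<delta> \<in> Field L" using L_countably_bounded[of "{}"] by blast \<comment> \<open>L is nonempty\<close>
      thus ?thesis using 1 cylinder_subset by blast
    next
      case (2 a)
      obtain \<alpha> where \<alpha>: "\<alpha> \<in> Field L" "W_less k (h \<alpha>) (a \<alpha>)" "\<forall>\<beta>\<in>underS L \<alpha>. h \<beta> = a \<beta>"
        using lex_less_witness Basis(2) 2 by blast
      have "cylinder \<alpha> h \<subseteq> s"
        using lex_less_local[OF \<alpha> _ agree_upto_refl] 2 unfolding cylinder_def by blast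
      thus ?thesis using \<alpha>(1) by blast
    next
      case (3 a)
      obtain \<alpha> where \<alpha>: "\<alpha> \<in> Field L" "W_less k (a \<alpha>) (h \<alpha>)" "\<forall>\<beta>\<in>underS L \<alpha>. a \<beta> = h \<beta>"
        using lex_less_witness Basis(2) 3 by blast
      have "cylinder \<alpha> h \<subseteq> s"
        using lex_less_local[OF \<alpha> agree_upto_refl] 3 unfolding cylinder_def by blast
      thus ?thesis using \<alpha>(1) by blast
    qed
  qed
qed

text \<open>Conversely, each cylinder contains an open interval around its vertex: modify h at a
  coordinate w beyond delta and beyond the support of h, downwards to -1 and upwards.\<close>
lemma cylinder_contains_interval:
  assumes h: "h \<in> X" and \<delta>: "\<delta> \<in> Field L"
  shows "\<exists>a b. a \<in> X \<and> b \<in> X \<and> lt a h \<and> lt h b \<and> {y\<in>X. lt a y} \<inter> {y\<in>X. lt y b} \<subseteq> cylinder \<delta> h"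
proof -
  obtain \<gamma> where \<gamma>: "\<gamma> \<in> Field L" "\<forall>\<alpha>\<in>Field L. (\<gamma>, \<alpha>) \<in> L \<longrightarrow> h \<alpha> = Some zero"
    using X_memD(3)[OF h] by blast
  obtain w where w: "w \<in> Field L" "\<gamma> \<in> underS L w" "\<delta> \<in> underS L w"
    using L_unbounded_pair[OF \<gamma>(1) \<delta>] by blast
  have hw: "h w = Some zero" using \<gamma> w unfolding underS_def by blast
  obtain c where c: "c \<in> Field k" "W_less k (Some zero) (Some c)" using exists_above_zero by blast
  define a where "a = h(w := None)"
  define b where "b = h(w := Some c)"
  have ab: "a \<in> X" "b \<in> X" unfolding a_def b_def using X_update[OF h w(1)] c(1) by (auto simp: W_set_def)
  have "w \<notin> under L \<delta>" using w(3) well_order_antisym[OF L_wo] unfolding underS_def under_def by blast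
  hence agree: "agree_upto \<delta> a h" "agree_upto \<delta> b h"
    unfolding a_def b_def agree_upto_def under_def by auto
  have "lt a h" by (rule lex_lessI[OF w(1)]) (auto simp: a_def hw underS_def)
  moreover have "lt h b" by (rule lex_lessI[OF w(1)]) (use c in \<open>auto simp: b_def hw underS_def\<close>)
  moreover have "y \<in> cylinder \<delta> h" if y: "y \<in> X" "lt a y" "lt y b" for y
  proof -
    have "\<not> lt y a" "\<not> lt b y" using y lex_less_trans lex_less_irrefl by blast+
    consider "y = h" | "lt y h" | "lt h y" using lex_less_total[OF y(1) h] by blast
    hence "agree_upto \<delta> y h"
    proof cases
      case 2
      thus ?thesis using lex_less_upto_cases[OF 2 \<delta>] agree(1) \<open>\<not> lt y a\<close> by auto
    next
      case 3
      hence "agree_upto \<delta> h y" using lex_less_upto_cases[OF 3 \<delta>] agree(2) \<open>\<not> lt b y\<close> by auto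
      thus ?thesis unfolding agree_upto_def by simp
    qed simp
    thus ?thesis using y(1) unfolding cylinder_def by blast
  qed
  ultimately show ?thesis using ab by blast
qed

lemma openin_cylinder:
  assumes "\<delta> \<in> Field L"
  shows "openin XT (cylinder \<delta> p)"
proof -
  have "\<exists>V. openin XT V \<and> h \<in> V \<and> V \<subseteq> cylinder \<delta> p" if h: "h \<in> cylinder \<delta> p" for h
  proof -
    have hX: "h \<in> X" using h cylinder_subset by blast
    obtain a b where "a \<in> X" "b \<in> X" "lt a h" "lt h b"
        "{y\<in>X. lt a y} \<inter> {y\<in>X. lt y b} \<subseteq> cylinder \<delta> h"
      using cylinder_contains_interval[OF hX assms] by blast
    thus ?thesis
      using hX cylinder_eq_of_mem[OF h] openin_Int[OF openin_ray_above openin_ray_below]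
      by (intro exI[of _ "{y\<in>X. lt a y} \<inter> {y\<in>X. lt y b}"]) auto
  qed
  thus ?thesis using openin_subopen by blast
qed

section \<open>X is non-archimedean\<close>

definition cylinders :: "('i \<Rightarrow> 'a option) set set" where
  "cylinders = {cylinder \<delta> p | \<delta> p. \<delta> \<in> Field L \<and> p \<in> X}"

lemma cylinders_base: "is_base_of XT cylinders"
  unfolding is_base_of_def
proof (intro conjI ballI allI impI)
  fix U assume "U \<in> cylinders"
  thus "openin XT U" unfolding cylinders_def using openin_cylinder by blast
next
  fix U assume U: "openin XT U"
  let ?\<U> = "{V \<in> cylinders. V \<subseteq> U}"
  have "U \<subseteq> \<Union>?\<U>"
  proof
    fix h assume h: "h \<in> U"
    obtain \<delta> where "\<delta> \<in> Field L" "cylinder \<delta> h \<subseteq> U" using open_contains_cylinder[OF U h] by blast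
    moreover have "h \<in> X" using h openin_XT_subset[OF U] by blast
    ultimately show "h \<in> \<Union>?\<U>" using mem_cylinder_self unfolding cylinders_def by blast
  qed
  thus "\<exists>\<U>\<subseteq>cylinders. U = \<Union>\<U>" by (intro exI[of _ ?\<U>]) blast
qed

theorem non_archimedean_XT: "non_archimedean XT"
  unfolding non_archimedean_def
proof (intro exI[of _ cylinders] conjI ballI)
  fix U V assume "U \<in> cylinders" "V \<in> cylinders"
  thus "U \<inter> V = {} \<or> U \<subseteq> V \<or> V \<subseteq> U"
    unfolding cylinders_def using cylinders_nested_or_disjoint by blast
qed (rule cylinders_base)

section \<open>X is strong Choquet\<close>

text \<open>Gluing a sequence of points: below d n take the value of f n, on the rest of L take 0,
  and None outside L.  For a decreasing sequence of cylinders the choice of n is irrelevant.\<close>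
definition glue :: "(nat \<Rightarrow> 'i \<Rightarrow> 'a option) \<Rightarrow> (nat \<Rightarrow> 'i) \<Rightarrow> 'i \<Rightarrow> 'a option" where
  "glue f d \<beta> = (if \<exists>n. (\<beta>, d n) \<in> L then f (SOME n. (\<beta>, d n) \<in> L) \<beta>
      else if \<beta> \<in> Field L then Some zero else None)"

lemma glue_eq:
  assumes nested: "\<And>n m. n \<le> m \<Longrightarrow> f m \<in> cylinder (d n) (f n)" and \<beta>: "(\<beta>, d n) \<in> L"
  shows "glue f d \<beta> = f n \<beta>"
proof -
  define m where "m = (SOME n. (\<beta>, d n) \<in> L)"
  have "(\<beta>, d m) \<in> L" unfolding m_def using \<beta> by (rule someI)
  moreover have "glue f d \<beta> = f m \<beta>" unfolding glue_def m_def using \<beta> by (simp (no_asm_simp)) blast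
  moreover have "f m \<beta> = f n \<beta>"
  proof (cases "n \<le> m")
    case True thus ?thesis using nested[OF True] \<beta> unfolding cylinder_def agree_upto_def by blast
  next
    case False
    hence "f n \<in> cylinder (d m) (f m)" by (intro nested) simp
    thus ?thesis using \<open>(\<beta>, d m) \<in> L\<close> unfolding cylinder_def agree_upto_def by simp
  qed
  ultimately show ?thesis by simp
qed

text \<open>The glued function is eventually 0: the countably many d n are bounded by some eta.\<close>
lemma glue_in_X:
  fixes f :: "nat \<Rightarrow> 'i \<Rightarrow> 'a option" and d :: "nat \<Rightarrow> 'i"
  assumes f: "\<And>n. f n \<in> X" and d: "\<And>n. d n \<in> Field L"
    and nested: "\<And>n m. n \<le> m \<Longrightarrow> f m \<in> cylinder (d n) (f n)"
  shows "glue f d \<in> X"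
  unfolding Xspace_def
proof (intro CollectI conjI ballI allI impI)
  fix \<alpha> assume \<alpha>: "\<alpha> \<in> Field L"
  show "glue f d \<alpha> \<in> W_set k"
  proof (cases "\<exists>n. (\<alpha>, d n) \<in> L")
    case True
    then obtain n where "(\<alpha>, d n) \<in> L" by blast
    thus ?thesis using glue_eq[OF nested] X_memD(1)[OF f \<alpha>] by simp
  qed (use \<alpha> zero_in in \<open>simp add: glue_def W_set_def\<close>)
next
  fix \<alpha> assume "\<alpha> \<notin> Field L"
  moreover from this have "\<not> (\<exists>n. (\<alpha>, d n) \<in> L)" by (auto intro: FieldI1)
  ultimately show "glue f d \<alpha> = None" unfolding glue_def by simp
next
  have "range d \<subseteq> Field L" "countable (range d)" using d by auto
  then obtain \<eta> where \<eta>: "\<eta> \<in> Field L" "range d \<subseteq> underS L \<eta>"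
    using L_countably_bounded by blast
  have "glue f d \<alpha> = Some zero" if \<alpha>: "\<alpha> \<in> Field L" "(\<eta>, \<alpha>) \<in> L" for \<alpha>
  proof -
    have "(\<alpha>, d n) \<notin> L" for n
    proof
      assume "(\<alpha>, d n) \<in> L"
      hence "(\<eta>, d n) \<in> L" by (rule well_order_trans[OF L_wo \<alpha>(2)])
      moreover have "d n \<in> underS L \<eta>" using \<eta>(2) by blast
      ultimately have "\<eta> \<in> underS L \<eta>" by (rule le_underS_trans)
      thus False unfolding underS_def by blast
    qed
    thus ?thesis using \<alpha>(1) unfolding glue_def by simp
  qed
  thus "\<exists>\<gamma>\<in>Field L. \<forall>\<alpha>\<in>Field L. (\<gamma>, \<alpha>) \<in> L \<longrightarrow> glue f d \<alpha> = Some zero" using \<eta>(1) by blast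
qed

lemma nested_cylinders_meet:
  fixes f :: "nat \<Rightarrow> 'i \<Rightarrow> 'a option" and d :: "nat \<Rightarrow> 'i"
  assumes f: "\<And>n. f n \<in> X" and d: "\<And>n. d n \<in> Field L"
    and nested: "\<And>n m. n \<le> m \<Longrightarrow> f m \<in> cylinder (d n) (f n)"
  shows "\<exists>g. \<forall>n. g \<in> cylinder (d n) (f n)"
proof (intro exI allI)
  fix n
  show "glue f d \<in> cylinder (d n) (f n)"
    unfolding cylinder_def agree_upto_def using glue_in_X[OF assms] glue_eq[OF nested, where n = n] by simp
qed

definition cylinder_index :: "('i \<Rightarrow> 'a option) set \<Rightarrow> ('i \<Rightarrow> 'a option) \<Rightarrow> 'i" where
  "cylinder_index B x = (SOME \<delta>. \<delta> \<in> Field L \<and> cylinder \<delta> x \<subseteq> B)"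

definition cylinder_strategy :: "(('i \<Rightarrow> 'a option) set \<times> ('i \<Rightarrow> 'a option)) list \<Rightarrow> ('i \<Rightarrow> 'a option) set" where
  "cylinder_strategy hist = (case last hist of (B, x) \<Rightarrow> cylinder (cylinder_index B x) x)"

lemma cylinder_index:
  assumes "openin XT B" "x \<in> B"
  shows "cylinder_index B x \<in> Field L" "cylinder (cylinder_index B x) x \<subseteq> B"
proof -
  have "\<exists>\<delta>. \<delta> \<in> Field L \<and> cylinder \<delta> x \<subseteq> B" using open_contains_cylinder[OF assms] by blast
  from someI_ex[OF this] show "cylinder_index B x \<in> Field L" "cylinder (cylinder_index B x) x \<subseteq> B"
    unfolding cylinder_index_def by blast+
qed

lemma cylinder_strategy_answer:
  "choquet_answer cylinder_strategy B f n = cylinder (cylinder_index (B n) (f n)) (f n)"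
  unfolding choquet_answer_def cylinder_strategy_def by simp

lemma cylinder_strategy_legal:
  assumes "openin XT B" "x \<in> B"
  shows "openin XT (cylinder (cylinder_index B x) x) \<and> x \<in> cylinder (cylinder_index B x) x \<and> cylinder (cylinder_index B x) x \<subseteq> B"
  using cylinder_index[OF assms] openin_cylinder mem_cylinder_self openin_XT_subset[OF assms(1)] assms(2) by blast

text \<open>The cylinders chosen along a legal play are nested, hence meet by completeness.\<close>
theorem strong_choquet_XT: "strong_choquet XT"
  unfolding strong_choquet_def
proof (intro exI[of _ cylinder_strategy] conjI allI impI)
  fix B f n assume "choquet_I_legal_upto XT cylinder_strategy B f n"
  hence "openin XT (B n)" "f n \<in> B n" unfolding choquet_I_legal_upto_def by auto
  thus "openin XT (choquet_answer cylinder_strategy B f n)" "f n \<in> choquet_answer cylinder_strategy B f n"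
    "choquet_answer cylinder_strategy B f n \<subseteq> B n"
    using cylinder_strategy_legal unfolding cylinder_strategy_answer by auto
next
  fix B f assume legal: "\<forall>n. choquet_I_legal_upto XT cylinder_strategy B f n"
  define d where "d n = cylinder_index (B n) (f n)" for n
  have B: "openin XT (B n)" "f n \<in> B n" for n using legal unfolding choquet_I_legal_upto_def by auto
  have A: "f n \<in> cylinder (d n) (f n)" "cylinder (d n) (f n) \<subseteq> B n" "d n \<in> Field L" for n
    using cylinder_strategy_legal[OF B] cylinder_index[OF B] unfolding d_def by auto
  have next_in: "B (Suc n) \<subseteq> cylinder (d n) (f n)" for n
    using legal[rule_format, of "Suc n"] unfolding choquet_I_legal_upto_def cylinder_strategy_answer d_def
    by fastforce
  have decreasing: "cylinder (d m) (f m) \<subseteq> cylinder (d n) (f n)" if "n \<le> m" for n m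
    using that
  proof (induction rule: dec_induct)
    case (step q) thus ?case using A(2)[of "Suc q"] next_in[of q] by blast
  qed simp
  have "f n \<in> X" for n using A(1) cylinder_subset by blast
  then obtain g where "\<forall>n. g \<in> cylinder (d n) (f n)"
    using nested_cylinders_meet[of f d] A(1,3) decreasing by blast
  thus "(\<Inter>n. choquet_answer cylinder_strategy B f n) \<noteq> {}"
    unfolding cylinder_strategy_answer d_def[symmetric] by blast
qed

section \<open>X is hereditarily paracompact\<close>

lemma least_cylinder_absorbed:
  assumes y: "y \<in> X" and \<delta>\<epsilon>: "(\<delta>, \<epsilon>) \<in> L" and meet: "cylinder \<delta> x \<inter> cylinder \<epsilon> y \<noteq> {}"
    and Q\<delta>: "Q (cylinder \<delta> x)" and least: "\<And>\<epsilon>'. \<epsilon>' \<in> Field L \<Longrightarrow> Q (cylinder \<epsilon>' y) \<Longrightarrow> (\<epsilon>, \<epsilon>') \<in> L"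
  shows "cylinder \<delta> x = cylinder \<epsilon> y"
proof -
  obtain h where h: "h \<in> cylinder \<delta> x" "h \<in> cylinder \<epsilon> y" using meet by blast
  have "y \<in> cylinder \<delta> x"
    using mem_cylinder_self[OF y] cylinder_antimono[OF \<delta>\<epsilon>, of h] cylinder_eq_of_mem[OF h(1)] cylinder_eq_of_mem[OF h(2)]
    by blast
  hence "cylinder \<delta> y = cylinder \<delta> x" by (rule cylinder_eq_of_mem)
  hence "(\<epsilon>, \<delta>) \<in> L" using least[OF FieldI1[OF \<delta>\<epsilon>]] Q\<delta> by simp
  hence "\<delta> = \<epsilon>" using well_order_antisym[OF L_wo \<delta>\<epsilon>] by blast
  thus ?thesis using cylinder_eq_of_mem[OF h(1)] cylinder_eq_of_mem[OF h(2)] by simp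
qed

lemma least_cylinders_disjoint:
  assumes SX: "S \<subseteq> X" and ex: "\<And>x. x \<in> S \<Longrightarrow> \<exists>\<delta>\<in>Field L. Q (cylinder \<delta> x)"
  shows "\<exists>m. (\<forall>x\<in>S. m x \<in> Field L \<and> Q (cylinder (m x) x)) \<and>
    (\<forall>x\<in>S. \<forall>y\<in>S. cylinder (m x) x \<inter> cylinder (m y) y \<noteq> {} \<longrightarrow> cylinder (m x) x = cylinder (m y) y)"
proof -
  define good where "good x = {\<delta>\<in>Field L. Q (cylinder \<delta> x)}" for x
  define m where "m x = (SOME \<delta>. \<delta> \<in> good x \<and> (\<forall>\<delta>'\<in>good x. (\<delta>, \<delta>') \<in> L))" for x
  have m: "m x \<in> good x" "\<And>\<delta>'. \<delta>' \<in> good x \<Longrightarrow> (m x, \<delta>') \<in> L" if "x \<in> S" for x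
  proof -
    have "good x \<subseteq> Field L" "good x \<noteq> {}" using ex[OF that] unfolding good_def by auto
    from well_order_least[OF L_wo this]
    have "\<exists>\<delta>. \<delta> \<in> good x \<and> (\<forall>\<delta>'\<in>good x. (\<delta>, \<delta>') \<in> L)" by blast
    from someI_ex[OF this] show "m x \<in> good x" "\<And>\<delta>'. \<delta>' \<in> good x \<Longrightarrow> (m x, \<delta>') \<in> L"
      unfolding m_def by blast+
  qed
  have least: "\<And>\<delta>'. \<delta>' \<in> Field L \<Longrightarrow> Q (cylinder \<delta>' z) \<Longrightarrow> (m z, \<delta>') \<in> L" if "z \<in> S" for z
    using m(2)[OF that] unfolding good_def by blast
  have "cylinder (m x) x = cylinder (m y) y"
    if xy: "x \<in> S" "y \<in> S" and meet: "cylinder (m x) x \<inter> cylinder (m y) y \<noteq> {}" for x y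
  proof -
    have "m x \<in> Field L" "m y \<in> Field L" "Q (cylinder (m x) x)" "Q (cylinder (m y) y)"
      using m(1) xy unfolding good_def by blast+
    thus ?thesis
      using well_order_total[OF L_wo, of "m x" "m y"] least_cylinder_absorbed[of y "m x" "m y" x Q]
        least_cylinder_absorbed[of x "m y" "m x" y Q] least xy SX meet by (metis inf_commute subsetD)
  qed
  moreover have "\<forall>x\<in>S. m x \<in> Field L \<and> Q (cylinder (m x) x)" using m(1) unfolding good_def by blast
  ultimately show ?thesis by blast
qed

text \<open>Given an open cover of a subspace S, the least cylinders around the points of S that
  fit inside a member of the cover, intersected with S, form a disjoint open refinement.\<close>
theorem hereditarily_paracompact_XT: "hereditarily_paracompact XT"
  unfolding hereditarily_paracompact_def paracompact_space_def
proof (intro allI impI)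
  fix S :: "('i \<Rightarrow> 'a option) set" and \<C>
  assume S: "S \<subseteq> topspace XT"
    and cover: "(\<forall>C\<in>\<C>. openin (subtopology XT S) C) \<and> \<Union>\<C> = topspace (subtopology XT S)"
  have SX: "S \<subseteq> X" and top_S: "topspace (subtopology XT S) = S" using S topspace_XT by auto
  define fits where "fits A \<longleftrightarrow> (\<exists>C\<in>\<C>. A \<inter> S \<subseteq> C)" for A
  have "\<exists>\<delta>\<in>Field L. fits (cylinder \<delta> x)" if x: "x \<in> S" for x
  proof -
    obtain C where C: "C \<in> \<C>" "x \<in> C" using cover x top_S by blast
    then obtain V where V: "openin XT V" "C = V \<inter> S" using cover unfolding openin_subtopology by blast
    then obtain \<delta> where "\<delta> \<in> Field L" "cylinder \<delta> x \<subseteq> V" using open_contains_cylinder C(2) by blast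
    thus ?thesis using C V unfolding fits_def by blast
  qed
  then obtain m where m: "\<forall>x\<in>S. m x \<in> Field L \<and> fits (cylinder (m x) x)"
    and disjoint: "\<forall>x\<in>S. \<forall>y\<in>S. cylinder (m x) x \<inter> cylinder (m y) y \<noteq> {} \<longrightarrow>
        cylinder (m x) x = cylinder (m y) y"
    using least_cylinders_disjoint[OF SX] by blast
  define D where "D x = cylinder (m x) x \<inter> S" for x
  have D_open: "openin (subtopology XT S) (D x)" if "x \<in> S" for x
    using openin_cylinder m that unfolding D_def openin_subtopology by blast
  have D_cover: "\<Union>(D ` S) = topspace (subtopology XT S)"
    using mem_cylinder_self SX top_S unfolding D_def by blast
  have D_disjoint: "D x = D y" if "x \<in> S" "y \<in> S" "D x \<inter> D y \<noteq> {}" for x y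
    using disjoint that unfolding D_def by blast
  show "\<exists>\<D>. (\<forall>D\<in>\<D>. openin (subtopology XT S) D \<and> (\<exists>C\<in>\<C>. D \<subseteq> C)) \<and>
            \<Union>\<D> = topspace (subtopology XT S) \<and> locally_finite_in (subtopology XT S) \<D>"
  proof (intro exI[of _ "D ` S"] conjI ballI)
    fix E assume "E \<in> D ` S"
    then obtain x where x: "x \<in> S" "E = D x" by blast
    show "openin (subtopology XT S) E" using D_open x by blast
    show "\<exists>C\<in>\<C>. E \<subseteq> C" using m x unfolding D_def fits_def by blast
  next
    show "locally_finite_in (subtopology XT S) (D ` S)"
      using locally_finite_in_disjoint_open_cover[of "D ` S" "subtopology XT S"] D_open D_cover D_disjoint
      by blast
  qed (rule D_cover)
qed

section \<open>X is a union of |L| discrete subspaces\<close>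

definition supported_upto :: "'i \<Rightarrow> ('i \<Rightarrow> 'a option) set" where
  "supported_upto \<delta> = {f \<in> X. \<forall>\<beta>\<in>Field L. (\<delta>, \<beta>) \<in> L \<longrightarrow> f \<beta> = Some zero}"

lemma cylinder_inter_supported_upto:
  assumes \<delta>: "\<delta> \<in> Field L" and x: "x \<in> supported_upto \<delta>"
  shows "cylinder \<delta> x \<inter> supported_upto \<delta> = {x}"
proof
  have "x \<in> X" using x unfolding supported_upto_def by blast
  thus "{x} \<subseteq> cylinder \<delta> x \<inter> supported_upto \<delta>" using x mem_cylinder_self by blast
  show "cylinder \<delta> x \<inter> supported_upto \<delta> \<subseteq> {x}"
  proof
    fix y assume y: "y \<in> cylinder \<delta> x \<inter> supported_upto \<delta>"
    have "y \<beta> = x \<beta>" for \<beta>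
    proof (cases "\<beta> \<in> Field L")
      case False
      have "y \<in> X" "x \<in> X" using x y unfolding supported_upto_def by auto
      thus ?thesis using X_memD(2) False by metis
    next
      case True
      thus ?thesis
        using well_order_total[OF L_wo True \<delta>] y x unfolding cylinder_def agree_upto_def supported_upto_def by auto
    qed
    thus "y \<in> {x}" by auto
  qed
qed

lemma discrete_supported_upto:
  assumes \<delta>: "\<delta> \<in> Field L"
  shows "subtopology XT (supported_upto \<delta>) = discrete_topology (supported_upto \<delta>)"
proof -
  have "discrete_topology (supported_upto \<delta>) = subtopology XT (supported_upto \<delta>)"
    unfolding discrete_topology_unique
  proof (intro conjI ballI)
    show "topspace (subtopology XT (supported_upto \<delta>)) = supported_upto \<delta>"
      unfolding topspace_subtopology topspace_XT supported_upto_def by blast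
    fix x assume "x \<in> supported_upto \<delta>"
    thus "openin (subtopology XT (supported_upto \<delta>)) {x}"
      using cylinder_inter_supported_upto[OF \<delta>] openin_cylinder[OF \<delta>] unfolding openin_subtopology by metis
  qed
  thus ?thesis by simp
qed

theorem dis_le_XT: "dis_le XT (Field L)"
  unfolding dis_le_def
proof (intro exI[of _ "supported_upto ` Field L"] conjI ballI)
  show "\<Union>(supported_upto ` Field L) = topspace XT"
    using X_memD(3) unfolding topspace_XT supported_upto_def by blast
  show "|supported_upto ` Field L| \<le>o |Field L|" by (rule card_of_image)
  fix D assume "D \<in> supported_upto ` Field L"
  thus "D \<subseteq> topspace XT" "subtopology XT D = discrete_topology D"
    using discrete_supported_upto unfolding topspace_XT supported_upto_def by blast+
qed

section \<open>Every non-empty open subset of X has more than kappa points\<close>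

lemma cylinder_prescribe:
  assumes p: "p \<in> X" and \<delta>: "\<delta> \<in> Field L" and A: "A \<subseteq> aboveS L \<delta>" and \<eta>: "\<eta> \<in> Field L" "A \<subseteq> underS L \<eta>"
    and v: "\<And>\<alpha>. \<alpha> \<in> A \<Longrightarrow> v \<alpha> \<in> W_set k"
  shows "\<exists>g\<in>cylinder \<delta> p. \<forall>\<alpha>\<in>A. g \<alpha> = v \<alpha>"
proof -
  define g where "g \<beta> = (if \<beta> \<notin> Field L then None else if (\<beta>, \<delta>) \<in> L then p \<beta>
      else if \<beta> \<in> A then v \<beta> else Some zero)" for \<beta>
  have A_not_le: "(\<alpha>, \<delta>) \<notin> L" if "\<alpha> \<in> A" for \<alpha>
  proof -
    have "\<alpha> \<noteq> \<delta>" "(\<delta>, \<alpha>) \<in> L" using that A unfolding aboveS_def by auto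
    thus ?thesis using well_order_antisym[OF L_wo \<open>(\<delta>, \<alpha>) \<in> L\<close>] by blast
  qed
  have A_Field: "A \<subseteq> Field L" using \<eta>(2) by (auto simp: underS_def intro: FieldI1)
  obtain \<gamma> where \<gamma>: "\<gamma> \<in> Field L" "\<delta> \<in> underS L \<gamma>" "\<eta> \<in> underS L \<gamma>"
    using L_unbounded_pair[OF \<delta> \<eta>(1)] by blast
  have beyond: "g \<alpha> = Some zero" if \<alpha>: "\<alpha> \<in> Field L" "(\<gamma>, \<alpha>) \<in> L" for \<alpha>
  proof -
    have "\<delta> \<in> underS L \<alpha>" "\<eta> \<in> underS L \<alpha>" using \<gamma>(2,3) \<alpha>(2) underS_trans by blast+
    hence "(\<alpha>, \<delta>) \<notin> L" "\<alpha> \<notin> A"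
      using \<eta>(2) well_order_antisym[OF L_wo] unfolding underS_def by blast+
    thus ?thesis using \<alpha>(1) unfolding g_def by simp
  qed
  have "g \<in> X"
    unfolding Xspace_def
  proof (intro CollectI conjI ballI allI impI)
    fix \<alpha> assume "\<alpha> \<in> Field L"
    thus "g \<alpha> \<in> W_set k" using X_memD(1)[OF p] v zero_in unfolding g_def W_set_def by auto
  next
    fix \<alpha> assume "\<alpha> \<notin> Field L" thus "g \<alpha> = None" unfolding g_def by simp
  next
    show "\<exists>\<gamma>\<in>Field L. \<forall>\<alpha>\<in>Field L. (\<gamma>, \<alpha>) \<in> L \<longrightarrow> g \<alpha> = Some zero"
      using \<gamma>(1) beyond by blast
  qed
  moreover have "agree_upto \<delta> g p" unfolding agree_upto_def g_def by (auto intro: FieldI1)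
  moreover have "\<forall>\<alpha>\<in>A. g \<alpha> = v \<alpha>" using A_Field A_not_le unfolding g_def by auto
  ultimately show ?thesis unfolding cylinder_def by blast
qed

text \<open>Koenig-type diagonal argument: a cylinder has more than kappa points.  Enumerate it
  (if it had at most kappa points) by H on kappa, and choose, at the coordinate e s attached to
  s in a cofinal set S, a value missed by the fewer than kappa points H xi with xi \<le> s.  The
  point of the cylinder with these values is not enumerated.\<close>
lemma cylinder_larger_than_kappa:
  assumes S: "cofinal_in k S" and p: "p \<in> X" and \<delta>: "\<delta> \<in> Field L"
    and e: "inj_on e S" "e ` S \<subseteq> aboveS L \<delta>" and \<eta>: "\<eta> \<in> Field L" "e ` S \<subseteq> underS L \<eta>"
  shows "|Field k| <o |cylinder \<delta> p|"
proof (rule ccontr)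
  assume "\<not> |Field k| <o |cylinder \<delta> p|"
  hence "|cylinder \<delta> p| \<le>o |Field k|"
    using not_ordLess_iff_ordLeq[OF card_of_Well_order card_of_Well_order] by blast
  moreover have "cylinder \<delta> p \<noteq> {}" using mem_cylinder_self[OF p] by blast
  ultimately obtain H where H: "H ` Field k = cylinder \<delta> p" using card_of_ordLeq2 by metis
  define V where "V s = (\<lambda>\<xi>. H \<xi> (e s)) ` under k s" for s
  have "\<exists>c\<in>Field k. Some c \<notin> V s" if s: "s \<in> S" for s
  proof (rule ccontr)
    assume "\<not> ?thesis"
    hence "Some ` Field k \<subseteq> V s" by blast
    hence "|Some ` Field k| \<le>o |under k s|"
      using ordLeq_transitive[OF card_of_mono1 card_of_image] unfolding V_def by blast
    moreover have "|Field k| \<le>o |Some ` Field k|"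
      unfolding card_of_ordLeq[symmetric] by (intro exI[of _ Some]) simp
    moreover have "|under k s| <o |Field k|"
      using card_of_under_less[OF k_card k_infinite] S s unfolding cofinal_in_def by blast
    ultimately show False using not_ordLess_ordLeq ordLeq_transitive by metis
  qed
  then obtain c where c: "\<And>s. s \<in> S \<Longrightarrow> c s \<in> Field k \<and> Some (c s) \<notin> V s" by metis
  obtain g where g: "g \<in> cylinder \<delta> p" "\<forall>\<alpha>\<in>e ` S. g \<alpha> = Some (c (inv_into S e \<alpha>))"
    using cylinder_prescribe[OF p \<delta> e(2) \<eta>, of "\<lambda>\<alpha>. Some (c (inv_into S e \<alpha>))"] c inv_into_into
    unfolding W_set_def by (metis (no_types, lifting) image_eqI insertI2)
  obtain \<xi> where \<xi>: "\<xi> \<in> Field k" "H \<xi> = g" using g(1) H by (metis imageE)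
  obtain s where s: "s \<in> S" "(\<xi>, s) \<in> k" using S \<xi>(1) unfolding cofinal_in_def by blast
  have "g (e s) \<in> V s" unfolding V_def under_def using s(2) \<xi>(2) by blast
  moreover have "g (e s) = Some (c s)" using g(2) s(1) inv_into_f_f[OF e(1) s(1)] by simp
  ultimately show False using c[OF s(1)] by simp
qed

theorem Delta_gt_XT:
  assumes S: "cofinal_in k S"
    and embed: "\<And>\<delta>. \<delta> \<in> Field L \<Longrightarrow>
      \<exists>e. inj_on e S \<and> e ` S \<subseteq> aboveS L \<delta> \<and> (\<exists>\<eta>\<in>Field L. e ` S \<subseteq> underS L \<eta>)"
  shows "Delta_gt XT (Field k)"
  unfolding Delta_gt_def
proof (intro allI impI)
  fix U assume U: "openin XT U \<and> U \<noteq> {}"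
  then obtain p where p: "p \<in> U" by blast
  then obtain \<delta> where \<delta>: "\<delta> \<in> Field L" "cylinder \<delta> p \<subseteq> U" using open_contains_cylinder U by blast
  obtain e \<eta> where "inj_on e S" "e ` S \<subseteq> aboveS L \<delta>" "\<eta> \<in> Field L" "e ` S \<subseteq> underS L \<eta>"
    using embed[OF \<delta>(1)] by blast
  moreover have "p \<in> X" using p openin_XT_subset U by blast
  ultimately have "|Field k| <o |cylinder \<delta> p|" using cylinder_larger_than_kappa[OF S _ \<delta>(1)] by blast
  thus "|Field k| <o |U|" using ordLess_ordLeq_trans[OF _ card_of_mono1[OF \<delta>(2)]] by blast
qed

end

theorem mainTheorem14:
  fixes k :: "'a rel" and l :: "'b rel"
  assumes "Card_order k" and "infinite (Field k)"
    and "Card_order l" and "infinite (Field l)"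
    and "cf_le k (Field l)"
    and "(l, k) \<in> ordLess"
  shows "strict_linear_on (Xspace k (cardSuc l)) (lex_less k (cardSuc l))
    \<and> strong_choquet (order_topology_on (Xspace k (cardSuc l)) (lex_less k (cardSuc l)))
    \<and> baire_space (order_topology_on (Xspace k (cardSuc l)) (lex_less k (cardSuc l)))
    \<and> non_archimedean (order_topology_on (Xspace k (cardSuc l)) (lex_less k (cardSuc l)))
    \<and> hereditarily_paracompact (order_topology_on (Xspace k (cardSuc l)) (lex_less k (cardSuc l)))
    \<and> dis_le (order_topology_on (Xspace k (cardSuc l)) (lex_less k (cardSuc l))) (Field (cardSuc l))
    \<and> (cardSuc l, k) \<in> ordLess
    \<and> Delta_gt (order_topology_on (Xspace k (cardSuc l)) (lex_less k (cardSuc l))) (Field k)"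
proof -
  have bounded: "\<exists>\<eta>\<in>Field (cardSuc l). A \<subseteq> underS (cardSuc l) \<eta>"
    if "A \<subseteq> Field (cardSuc l)" "countable A" for A
    using cardSuc_small_bounded[OF assms(3,4) that(1) countable_card_le_infinite[OF that(2) assms(4)]] .
  interpret lex_space k "cardSuc l"
    using assms(1,2) cardSuc_Well_order[OF assms(3)] bounded by unfold_locales
  obtain S where S: "cofinal_in k S" "|S| \<le>o |Field l|" using assms(5) unfolding cf_le_def by blast
  have "Delta_gt XT (Field k)"
    using Delta_gt_XT[OF S(1)] cardSuc_embed_above[OF assms(3,4) _ S(2)] by blast
  thus ?thesis
    using lex_strict_linear strong_choquet_XT strong_choquet_imp_baire[OF strong_choquet_XT]
      non_archimedean_XT hereditarily_paracompact_XT dis_le_XT cardSuc_less_of_cf_le[OF assms(1,3-6)]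
    by blast
qed

end
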